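(* Let $d=1$. (1) If $y\in\mathbb{Q}$, then $\Pi^{y}=\{x\in\mathbb{Q}:(\mathbb{Z}x+y)\cap\mathbb{Z}\neq\emptyset\}$. (2) If $x\in\mathbb{Q}$, then $\Phi(x)=\{y\in\mathbb{Q}:(\mathbb{Z}x+y)\cap\mathbb{Z}\neq\emptyset\}$.
   Context: For $t\in\mathbb{R}$, $\|t\|$ is the distance from $t$ to $\mathbb{Z}$. Write $\mathbb{N}=\{1,2,\dots\}$. $\mathcal{D}$ is the set of all non-increasing $\psi:\mathbb{N}\to\mathbb{R}_{\ge0}$ with $\sum_n\psi(n)=\infty$. $W(\psi)$ is the set of $(x,y)\in\mathbb{R}^2$ with $\|nx+y\|<\psi(n)$ for infinitely many $n\in\mathbb{N}$, and $\Pi=\bigcap_{\psi\in\mathcal{D}}W(\psi)$. $\Phi(x)=\{y\in\mathbb{R}:(x,y)\in\Pi\}$ and $\Pi^{y}=\{x\in\mathbb{R}:(x,y)\in\Pi\}$. $\mathbb{Z}x+y=\{kx+y:k\in\mathbb{Z}\}$. *)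

theory Defs
  imports "HOL-Analysis.Analysis"
begin

definition dist_int :: "real \<Rightarrow> real" where
  "dist_int t = (INF k\<in>(\<int>::real set). \<bar>t - k\<bar>)"

text \<open>Non-increasing functions N -> R>=0 with divergent sum (N = {1,2,...}).\<close>
definition Dset :: "(nat \<Rightarrow> real) set" where
  "Dset = {\<psi>. (\<forall>n\<ge>1. \<psi> n \<ge> 0) \<and> (\<forall>m n. 1 \<le> m \<longrightarrow> m \<le> n \<longrightarrow> \<psi> n \<le> \<psi> m)
              \<and> \<not> summable (\<lambda>n. \<psi> (Suc n))}"

definition W :: "(nat \<Rightarrow> real) \<Rightarrow> (real \<times> real) set" where
  "W \<psi> = {(x, y). infinite {n::nat. n \<ge> 1 \<and> dist_int (real n * x + y) < \<psi> n}}"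

definition Pi_set :: "(real \<times> real) set" where
  "Pi_set = (\<Inter>\<psi>\<in>Dset. W \<psi>)"

definition Phi :: "real \<Rightarrow> real set" where
  "Phi x = {y. (x, y) \<in> Pi_set}"

definition Pi_sup :: "real \<Rightarrow> real set" where
  "Pi_sup y = {x. (x, y) \<in> Pi_set}"

definition Zorbit :: "real \<Rightarrow> real \<Rightarrow> real set" where
  "Zorbit x y = {real_of_int k * x + y | k. True}"

end

theory Submission
  imports Defs
begin

text \<open>
  For rational \<open>x\<close> the sequence \<open>\<parallel>nx + y\<parallel>\<close> is periodic in \<open>n\<close>. Either it vanishes infinitely
  often, and then \<open>(x, y)\<close> lies in every \<open>W(\<psi>)\<close>, or it is bounded below by some \<open>c > 0\<close>, and
  then \<open>\<psi>(n) = c/n\<close> excludes \<open>(x, y)\<close>.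

  For irrational \<open>x\<close> and \<open>y = p/q\<close> put \<open>z = qx\<close> and \<open>\<delta>(n) = min {\<parallel>mz\<parallel> | 1 \<le> m \<le> n}\<close>. Since
  \<open>\<delta>(n) \<le> \<parallel>nz\<parallel> \<le> q\<parallel>nx + y\<parallel>\<close>, the non-increasing function \<open>\<psi> = \<delta>/(2q)\<close> excludes \<open>(x, y)\<close>. It is
  not summable: if \<open>b\<close> is a record, i.e. \<open>\<parallel>bz\<parallel> < \<delta>(b - 1) = \<parallel>az\<parallel>\<close>, then
  \<open>1 \<le> |b p\<^sub>a - a p\<^sub>b| < 2b \<delta>(b - 1)\<close> for the nearest integers \<open>p\<^sub>a, p\<^sub>b\<close>, so the block
  \<open>\<Sum>\<^bsub>N<n<b\<^esub> \<delta>(n)\<close> is at least \<open>1/4\<close> once \<open>b > 2N + 2\<close>; Dirichlet's theorem gives arbitrarily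
  large records.
\<close>

lemma dist_int_eq_round: "dist_int t = \<bar>t - of_int (round t)\<bar>"
  unfolding dist_int_def
proof (rule cInf_eq_minimum)
  show "\<bar>t - of_int (round t)\<bar> \<in> (\<lambda>k. \<bar>t - k\<bar>) ` \<int>"
    by (intro imageI) simp
next
  fix d assume "d \<in> (\<lambda>k. \<bar>t - k\<bar>) ` (\<int>::real set)"
  then obtain j where "d = \<bar>t - of_int j\<bar>"
    by (auto elim!: Ints_cases)
  then show "\<bar>t - of_int (round t)\<bar> \<le> d"
    by (simp add: round_diff_minimal)
qed

lemma dist_int_le: "k \<in> \<int> \<Longrightarrow> dist_int t \<le> \<bar>t - k\<bar>"
  by (auto elim!: Ints_cases simp: dist_int_eq_round round_diff_minimal)

lemma dist_int_nonneg: "dist_int t \<ge> 0"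
  by (simp add: dist_int_eq_round)

lemma dist_int_eq_0_iff: "dist_int t = 0 \<longleftrightarrow> t \<in> \<int>"
proof
  assume "dist_int t = 0"
  then show "t \<in> \<int>"
    by (simp add: dist_int_eq_round) (metis Ints_of_int)
next
  assume "t \<in> \<int>"
  then show "dist_int t = 0"
    using dist_int_le[of t t] dist_int_nonneg[of t] by simp
qed

lemma dist_int_add_Ints: "k \<in> \<int> \<Longrightarrow> dist_int (t + k) = dist_int t"
proof -
  have le: "dist_int (s + m) \<le> dist_int s" if "m \<in> \<int>" for s m
    using dist_int_le[of "of_int (round s) + m" "s + m"] that
    by (simp add: dist_int_eq_round)
  assume "k \<in> \<int>"
  then show ?thesis
    using le[of k t] le[of "-k" "t + k"] by simp
qed

lemma dist_int_of_nat_mult_le: "dist_int (real q * t) \<le> real q * dist_int t"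
proof -
  have "dist_int (real q * t) \<le> \<bar>real q * t - real q * of_int (round t)\<bar>"
    by (rule dist_int_le) simp
  also have "\<dots> = real q * dist_int t"
    by (simp add: dist_int_eq_round abs_mult right_diff_distrib[symmetric])
  finally show ?thesis .
qed

lemma Rats_obtain_period:
  assumes "x \<in> \<rat>"
  obtains B :: nat where "B \<ge> 1" "real B * x \<in> \<int>"
proof -
  obtain a b where ab: "x = of_int a / of_int b" "b > 0"
    using assms by (auto elim: Rats_cases')
  show ?thesis
  proof (rule that)
    show "nat b \<ge> 1"
      using ab(2) by simp
    have "real (nat b) * x = of_int a"
      using ab by simp
    then show "real (nat b) * x \<in> \<int>"
      by simp
  qed
qed

lemma of_nat_mult_notin_Rats:
  assumes "z \<notin> \<rat>" and "m \<ge> 1"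
  shows "real m * z \<notin> \<rat>"
proof
  assume "real m * z \<in> \<rat>"
  then have "real m * z / real m \<in> \<rat>"
    by (intro Rats_divide) auto
  with assms show False
    by simp
qed

lemma Dset_pos:
  assumes \<psi>: "\<psi> \<in> Dset" and n: "n \<ge> 1"
  shows "\<psi> n > 0"
proof (rule ccontr)
  assume "\<not> \<psi> n > 0"
  have "\<psi> m = 0" if "m \<ge> n" for m
  proof -
    have "0 \<le> \<psi> m" "\<psi> m \<le> \<psi> n"
      using \<psi> n that unfolding Dset_def by auto
    with \<open>\<not> \<psi> n > 0\<close> show ?thesis
      by linarith
  qed
  then have "\<forall>\<^sub>F k in sequentially. \<psi> (Suc k) = 0"
    by (auto simp: eventually_at_top_linorder intro!: exI[of _ n])
  then have "summable (\<lambda>k. \<psi> (Suc k))"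
    by (rule summable_cong[THEN iffD2]) simp
  with \<psi> show False
    by (simp add: Dset_def)
qed

lemma const_div_in_Dset:
  assumes "c > 0"
  shows "(\<lambda>n. c / real n) \<in> Dset"
proof -
  have "\<not> summable (\<lambda>n. 1 / real (Suc n))"
    using not_summable_harmonic[where 'a=real] summable_Suc_iff[of "\<lambda>n. 1 / real n"]
    by (simp add: inverse_eq_divide)
  then have "\<not> summable (\<lambda>n. c / real (Suc n))"
    using summable_cmult_iff[of c "\<lambda>n. 1 / real (Suc n)"] assms by simp
  moreover have "c / real n \<le> c / real m" if "1 \<le> m" "m \<le> n" for m n
    using that assms by (intro divide_left_mono) auto
  ultimately show ?thesis
    using assms by (auto simp: Dset_def)
qed

lemma not_summable_if_block_sums_ge:
  fixes f :: "nat \<Rightarrow> real"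
  assumes "e > 0" and "\<And>N. \<exists>M. e \<le> sum f {N..<M}"
  shows "\<not> summable f"
proof
  assume "summable f"
  then obtain N where N: "\<forall>m\<ge>N. \<forall>n. norm (sum f {m..<n}) < e"
    using \<open>e > 0\<close> unfolding summable_Cauchy by blast
  obtain M where "e \<le> sum f {N..<M}"
    using assms(2) by blast
  moreover have "\<bar>sum f {N..<M}\<bar> < e"
    using N by auto
  ultimately show False
    by linarith
qed

lemma notin_Pi_set_if_below:
  assumes "\<psi> \<in> Dset" and "\<And>n. n \<ge> 1 \<Longrightarrow> \<psi> n \<le> dist_int (real n * x + y)"
  shows "(x, y) \<notin> Pi_set"
proof -
  have "{n. n \<ge> 1 \<and> dist_int (real n * x + y) < \<psi> n} = {}"
    using assms(2) by force
  then have "(x, y) \<notin> W \<psi>"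
    unfolding W_def by (simp only: mem_Collect_eq case_prod_conv) simp
  then show ?thesis
    using assms(1) by (auto simp: Pi_set_def)
qed

lemma Zorbit_meets_Ints_iff: "Zorbit x y \<inter> \<int> \<noteq> {} \<longleftrightarrow> (\<exists>k. of_int k * x + y \<in> \<int>)"
  by (auto simp: Zorbit_def)

lemma infinite_hits_if_orbit_meets_Ints:
  assumes x: "x \<in> \<rat>" and k: "of_int k * x + y \<in> \<int>"
  shows "infinite {n. n \<ge> 1 \<and> real n * x + y \<in> \<int>}"
  unfolding infinite_nat_iff_unbounded
proof
  fix m
  obtain B :: nat where B: "B \<ge> 1" "real B * x \<in> \<int>"
    using Rats_obtain_period[OF x] .
  define j where "j = int m + \<bar>k\<bar> + 1"
  define n where "n = nat (k + j * int B)"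
  have "j \<le> j * int B"
    using mult_left_mono[of 1 "int B" j] B(1) j_def by simp
  then have "k + j * int B > int m"
    using j_def by linarith
  then have n: "int n = k + j * int B" "n > m"
    unfolding n_def by auto
  then have "real n = of_int k + of_int j * real B"
    by (metis of_int_add of_int_mult of_int_of_nat_eq)
  then have "real n * x + y = (of_int k * x + y) + of_int j * (real B * x)"
    by (simp add: algebra_simps)
  moreover have "of_int j * (real B * x) \<in> \<int>"
    using B(2) by simp
  ultimately have "real n * x + y \<in> \<int>"
    using k by (metis Ints_add)
  with n(2) show "\<exists>n>m. n \<in> {n. n \<ge> 1 \<and> real n * x + y \<in> \<int>}"
    by auto
qed

lemma in_Pi_set_if_orbit_meets_Ints:
  assumes "x \<in> \<rat>" and "of_int k * x + y \<in> \<int>"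
  shows "(x, y) \<in> Pi_set"
  unfolding Pi_set_def
proof
  fix \<psi> assume "\<psi> \<in> Dset"
  then have "{n. n \<ge> 1 \<and> real n * x + y \<in> \<int>}
      \<subseteq> {n. n \<ge> 1 \<and> dist_int (real n * x + y) < \<psi> n}"
    using Dset_pos by (auto simp: dist_int_eq_0_iff[THEN iffD2])
  then have "infinite {n. n \<ge> 1 \<and> dist_int (real n * x + y) < \<psi> n}"
    using infinite_hits_if_orbit_meets_Ints[OF assms] finite_subset by blast
  then show "(x, y) \<in> W \<psi>"
    by (simp add: W_def)
qed

lemma dist_int_bounded_below_if_no_hits:
  assumes x: "x \<in> \<rat>" and no_hits: "\<And>n. n \<ge> 1 \<Longrightarrow> real n * x + y \<notin> \<int>"
  obtains c where "c > 0" "\<And>n. n \<ge> 1 \<Longrightarrow> c \<le> dist_int (real n * x + y)"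
proof -
  obtain B :: nat where B: "B \<ge> 1" "real B * x \<in> \<int>"
    using Rats_obtain_period[OF x] .
  define c where "c = Min ((\<lambda>n. dist_int (real n * x + y)) ` {1..B})"
  have "c \<in> (\<lambda>n. dist_int (real n * x + y)) ` {1..B}"
    unfolding c_def using B(1) by (intro Min_in) auto
  then obtain r where r: "r \<in> {1..B}" "c = dist_int (real r * x + y)"
    by auto
  then have "c \<noteq> 0"
    using no_hits dist_int_eq_0_iff by simp
  then have "c > 0"
    using r(2) dist_int_nonneg[of "real r * x + y"] by linarith
  moreover have "c \<le> dist_int (real n * x + y)" if n: "n \<ge> 1" for n
  proof -
    define r where "r = (n - 1) mod B + 1"
    have r: "r \<in> {1..B}"
      using B(1) by (simp add: r_def Suc_leI)
    have shift: "real n * x + y = (real r * x + y) + real ((n - 1) div B) * (real B * x)"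
    proof -
      have "n = r + (n - 1) div B * B"
        using n by (simp add: r_def)
      then have "real n = real r + real ((n - 1) div B) * real B"
        by (metis of_nat_add of_nat_mult)
      then show ?thesis
        by (simp add: algebra_simps)
    qed
    have "real ((n - 1) div B) * (real B * x) \<in> \<int>"
      using B(2) by simp
    then have "dist_int (real n * x + y) = dist_int (real r * x + y)"
      unfolding shift by (rule dist_int_add_Ints)
    moreover have "c \<le> dist_int (real r * x + y)"
      unfolding c_def using r by (intro Min_le) auto
    ultimately show ?thesis
      by simp
  qed
  ultimately show ?thesis
    using that by blast
qed

lemma orbit_meets_Ints_if_in_Pi_set:
  assumes x: "x \<in> \<rat>" and in_Pi: "(x, y) \<in> Pi_set"
  shows "\<exists>n \<ge> 1. real n * x + y \<in> \<int>"
proof (rule ccontr)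
  assume "\<not> ?thesis"
  then obtain c where c: "c > 0" "\<And>n. n \<ge> 1 \<Longrightarrow> c \<le> dist_int (real n * x + y)"
    using dist_int_bounded_below_if_no_hits[OF x] by blast
  have "c / real n \<le> dist_int (real n * x + y)" if "n \<ge> 1" for n
  proof -
    have "c / real n \<le> c"
      using c(1) that by (simp add: divide_le_eq)
    with c(2)[OF that] show ?thesis
      by linarith
  qed
  then have "(x, y) \<notin> Pi_set"
    using notin_Pi_set_if_below const_div_in_Dset[OF c(1)] by blast
  with in_Pi show False
    by contradiction
qed

lemma Rats_in_Pi_set_iff:
  assumes "x \<in> \<rat>"
  shows "(x, y) \<in> Pi_set \<longleftrightarrow> Zorbit x y \<inter> \<int> \<noteq> {}"
proof
  assume "(x, y) \<in> Pi_set"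
  then obtain n :: nat where "real n * x + y \<in> \<int>"
    using orbit_meets_Ints_if_in_Pi_set[OF assms] by blast
  then have "of_int (int n) * x + y \<in> \<int>"
    by simp
  then show "Zorbit x y \<inter> \<int> \<noteq> {}"
    unfolding Zorbit_meets_Ints_iff by blast
next
  assume "Zorbit x y \<inter> \<int> \<noteq> {}"
  then show "(x, y) \<in> Pi_set"
    unfolding Zorbit_meets_Ints_iff using in_Pi_set_if_orbit_meets_Ints[OF assms] by blast
qed

definition min_dist_int :: "real \<Rightarrow> nat \<Rightarrow> real" where
  "min_dist_int z n = Min ((\<lambda>m. dist_int (real m * z)) ` {1..n})"

lemma min_dist_int_le: "1 \<le> m \<Longrightarrow> m \<le> n \<Longrightarrow> min_dist_int z n \<le> dist_int (real m * z)"
  unfolding min_dist_int_def by (intro Min_le) auto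

lemma min_dist_int_attained:
  assumes "1 \<le> n"
  obtains a where "1 \<le> a" "a \<le> n" "min_dist_int z n = dist_int (real a * z)"
proof -
  have "min_dist_int z n \<in> (\<lambda>m. dist_int (real m * z)) ` {1..n}"
    unfolding min_dist_int_def using assms by (intro Min_in) auto
  with that show ?thesis
    by auto
qed

lemma min_dist_int_antimono: "1 \<le> m \<Longrightarrow> m \<le> n \<Longrightarrow> min_dist_int z n \<le> min_dist_int z m"
  unfolding min_dist_int_def by (intro Min_antimono) auto

lemma min_dist_int_pos:
  assumes z: "z \<notin> \<rat>" and n: "1 \<le> n"
  shows "min_dist_int z n > 0"
proof -
  obtain a where a: "1 \<le> a" "min_dist_int z n = dist_int (real a * z)"
    using min_dist_int_attained[OF n] by metis
  have "real a * z \<notin> \<int>"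
    using of_nat_mult_notin_Rats[OF z a(1)] Ints_subset_Rats by blast
  then show ?thesis
    using a(2) dist_int_eq_0_iff dist_int_nonneg[of "real a * z"] by fastforce
qed

lemma dist_int_record_bound:
  fixes z :: real and a b :: nat
  assumes "1 \<le> a" "a < b" and closer: "dist_int (real b * z) < dist_int (real a * z)"
  shows "1 < 2 * real b * dist_int (real a * z)"
proof -
  define u v where "u = dist_int (real a * z)" and "v = dist_int (real b * z)"
  define X Y where "X = real a * (real b * z - of_int (round (real b * z)))"
    and "Y = real b * (real a * z - of_int (round (real a * z)))"
  define D where "D = int b * round (real a * z) - int a * round (real b * z)"
  have D: "of_int D = X - Y"
    by (simp add: D_def X_def Y_def algebra_simps)
  have X: "\<bar>X\<bar> = real a * v" and Y: "\<bar>Y\<bar> = real b * u"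
    by (simp_all add: X_def Y_def u_def v_def dist_int_eq_round abs_mult)
  have "real a * v < real a * u"
    using assms by (simp add: u_def v_def)
  also have "\<dots> \<le> real b * u"
    using assms dist_int_nonneg by (intro mult_right_mono) (auto simp: u_def)
  finally have av_less_bu: "real a * v < real b * u" .
  then have "0 < \<bar>of_int D :: real\<bar>"
    using abs_triangle_ineq2_sym[of Y X] unfolding D X Y by linarith
  then have "1 \<le> \<bar>of_int D :: real\<bar>"
    by (metis of_int_1_le_iff of_int_abs zero_less_abs_iff int_one_le_iff_zero_less of_int_0_less_iff)
  also have "\<dots> \<le> real a * v + real b * u"
    using abs_triangle_ineq4[of X Y] unfolding D X Y .
  also have "\<dots> < 2 * real b * u"
    using av_less_bu by linarith
  finally show ?thesis
    by (simp add: u_def)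
qed

lemma exists_dist_int_of_nat_mult_less:
  assumes "e > 0"
  obtains m :: nat where "m \<ge> 1" "dist_int (real m * z) < e"
proof -
  define N where "N = nat \<lceil>1 / e\<rceil> + 1"
  have "N > 0" "real N > 1 / e"
    unfolding N_def by linarith+
  then have "1 / real N < e"
    using assms by (simp add: field_simps)
  obtain h k where hk: "0 < k" "\<bar>of_int k * z - of_int h\<bar> < 1 / real N"
    using Dirichlet_approx[OF \<open>N > 0\<close>, of z] by blast
  have "dist_int (real (nat k) * z) \<le> \<bar>of_int k * z - of_int h\<bar>"
    using dist_int_le[of "of_int h" "real (nat k) * z"] hk(1) by simp
  with hk \<open>1 / real N < e\<close> show ?thesis
    using that[of "nat k"] by simp
qed

lemma exists_large_record:
  assumes z: "z \<notin> \<rat>" and M: "1 \<le> M"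
  shows "\<exists>b > M. 1 < 2 * real b * min_dist_int z (b - 1)"
proof -
  define e where "e = min_dist_int z M"
  define P where "P = (\<lambda>m. 1 \<le> m \<and> dist_int (real m * z) < e)"
  have "e > 0"
    using min_dist_int_pos[OF z M] by (simp add: e_def)
  then obtain m where "P m"
    using exists_dist_int_of_nat_mult_less unfolding P_def by blast
  define b where "b = (LEAST m. P m)"
  have Pb: "P b"
    unfolding b_def using \<open>P m\<close> by (rule LeastI)
  have far: "e \<le> dist_int (real j * z)" if "1 \<le> j" "j < b" for j
    using not_less_Least[of j P] that unfolding b_def P_def by auto
  have "b > M"
  proof (rule ccontr)
    assume "\<not> b > M"
    then have "e \<le> dist_int (real b * z)"
      using Pb min_dist_int_le[of b M z] unfolding P_def e_def by simp
    with Pb show False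
      unfolding P_def by simp
  qed
  then have "1 \<le> b - 1"
    using M by simp
  then obtain a where a: "1 \<le> a" "a \<le> b - 1" "min_dist_int z (b - 1) = dist_int (real a * z)"
    by (rule min_dist_int_attained)
  have "a < b"
    using a(2) \<open>1 \<le> b - 1\<close> by linarith
  then have "dist_int (real b * z) < dist_int (real a * z)"
    using far[OF a(1)] Pb unfolding P_def by linarith
  then have "1 < 2 * real b * dist_int (real a * z)"
    by (rule dist_int_record_bound[OF a(1) \<open>a < b\<close>])
  with \<open>b > M\<close> a(3) show ?thesis
    by auto
qed

lemma min_dist_int_not_summable:
  assumes "z \<notin> \<rat>"
  shows "\<not> summable (\<lambda>n. min_dist_int z (Suc n))"
proof (rule not_summable_if_block_sums_ge)
  show "(1 / 4 :: real) > 0"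
    by simp
  fix N
  obtain b where b: "b > 2 * N + 2" "1 < 2 * real b * min_dist_int z (b - 1)"
    using exists_large_record[OF assms, of "2 * N + 2"] by auto
  have "1 / 4 \<le> real b / 2 * min_dist_int z (b - 1)"
    using b(2) by simp
  also have "\<dots> \<le> real (b - 1 - N) * min_dist_int z (b - 1)"
    using b(1) less_imp_le[OF min_dist_int_pos[OF assms, of "b - 1"]]
    by (intro mult_right_mono) auto
  also have "\<dots> = (\<Sum>k\<in>{N..<b - 1}. min_dist_int z (b - 1))"
    by simp
  also have "\<dots> \<le> (\<Sum>k\<in>{N..<b - 1}. min_dist_int z (Suc k))"
    by (intro sum_mono min_dist_int_antimono) auto
  finally show "\<exists>M. 1 / 4 \<le> (\<Sum>k\<in>{N..<M}. min_dist_int z (Suc k))"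
    by blast
qed

lemma irrational_notin_Pi_set:
  assumes x: "x \<notin> \<rat>" and y: "y \<in> \<rat>"
  shows "(x, y) \<notin> Pi_set"
proof -
  obtain q :: nat where q: "q \<ge> 1" "real q * y \<in> \<int>"
    using Rats_obtain_period[OF y] .
  define z where "z = real q * x"
  have z: "z \<notin> \<rat>"
    unfolding z_def using of_nat_mult_notin_Rats[OF x q(1)] .
  define \<psi> where "\<psi> n = min_dist_int z n / (2 * real q)" for n
  have \<psi>_pos: "\<psi> n > 0" if "n \<ge> 1" for n
    using min_dist_int_pos[OF z that] q(1) by (simp add: \<psi>_def)
  have "\<psi> \<in> Dset"
    unfolding Dset_def
    using \<psi>_pos min_dist_int_antimono min_dist_int_not_summable[OF z] q(1)
    by (auto simp: \<psi>_def less_imp_le divide_right_mono)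
  moreover have "\<psi> n \<le> dist_int (real n * x + y)" if n: "n \<ge> 1" for n
  proof -
    have "real q * (real n * x + y) = real n * z + real q * y"
      by (simp add: z_def algebra_simps)
    then have "dist_int (real n * z) = dist_int (real q * (real n * x + y))"
      using dist_int_add_Ints[OF q(2)] by simp
    also have "\<dots> \<le> real q * dist_int (real n * x + y)"
      by (rule dist_int_of_nat_mult_le)
    finally have "min_dist_int z n \<le> real q * dist_int (real n * x + y)"
      using min_dist_int_le[OF n order_refl, of z] by linarith
    then have "\<psi> n \<le> dist_int (real n * x + y) / 2"
      using q(1) by (simp add: \<psi>_def field_simps)
    then show ?thesis
      using dist_int_nonneg[of "real n * x + y"] by linarith
  qed
  ultimately show ?thesis
    by (rule notin_Pi_set_if_below)
qed

theorem proposition20: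
  shows "(\<forall>y\<in>\<rat>. Pi_sup y = {x\<in>\<rat>. Zorbit x y \<inter> \<int> \<noteq> {}}) \<and>
         (\<forall>x\<in>\<rat>. Phi x = {y\<in>\<rat>. Zorbit x y \<inter> \<int> \<noteq> {}})"
proof (intro conjI ballI set_eqI)
  fix x y :: real assume "y \<in> \<rat>"
  then have "(x, y) \<in> Pi_set \<longleftrightarrow> x \<in> \<rat> \<and> (x, y) \<in> Pi_set"
    using irrational_notin_Pi_set by blast
  then show "x \<in> Pi_sup y \<longleftrightarrow> x \<in> {x \<in> \<rat>. Zorbit x y \<inter> \<int> \<noteq> {}}"
    using Rats_in_Pi_set_iff by (auto simp: Pi_sup_def)
next
  fix x y :: real assume x: "x \<in> \<rat>"
  have "y \<in> \<rat>" if "of_int k * x + y \<in> \<int>" for k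
  proof -
    have "y = (of_int k * x + y) - of_int k * x"
      by simp
    then show ?thesis
      using that x Ints_subset_Rats by (metis Rats_diff Rats_mult Rats_of_int subsetD)
  qed
  then show "y \<in> Phi x \<longleftrightarrow> y \<in> {y \<in> \<rat>. Zorbit x y \<inter> \<int> \<noteq> {}}"
    using Rats_in_Pi_set_iff[OF x] by (auto simp: Phi_def Zorbit_meets_Ints_iff)
qed

end
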